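(* Let $n\geq 2$, let $\mathbf{K},\mathbf{L}\in\mathbb{R}^{n\times n}$ be skew-symmetric matrices and let $S_1,S_2:\mathbb{R}^n\to\mathbb{R}$ be smooth functions. Consider the stochastic Runge-Kutta method described in the context (with $r$ stages in time, coefficients $a_{kj},b_k$, and $s$ stages in space, coefficients $\widetilde{a}_{mn},\widetilde{b}_m$), applied with time step $\tau>0$ and space step $h>0$ to $$\mathbf{K}\,{\rm d}_t z+\mathbf{L}z_x\,{\rm d}t=\nabla_z S_1(z)\,{\rm d}t+\nabla_z S_2(z)\circ {\rm d}W(t).$$ Assume that $$b_kb_j-b_ka_{kj}-b_ja_{jk}=0\quad\text{and}\quad \widetilde{b}_m\widetilde{b}_n-\widetilde{b}_m\widetilde{a}_{mn}-\widetilde{b}_n\widetilde{a}_{nm}=0$$ for all $k,j=1,\dots,r$ and all $m,n=1,\dots,s$. Then on every space-time cell (for all $p=0,1,\dots,P$ and $i=0,1,\dots,I$) the method satisfies, almost surely, the discrete stochastic multi-symplectic conservation law $$\frac{\omega^{p+1}-\omega^{p}}{\tau}+\frac{\kappa_{i+1}-\kappa_{i}}{h}=0,$$ where $$\omega^p=\frac{1}{2}\sum_{m=1}^s\widetilde{b}_m\,{\rm d}z_{m}^{p}\wedge \mathbf{K}\,{\rm d}z_{m}^{p},\qquad \kappa_{i}=\frac{1}{2}\sum_{k=1}^rb_k\,{\rm d}z_{i}^{k}\wedge \mathbf{L}\,{\rm d}z_{i}^{k},$$ and $\omega^{p+1},\kappa_{i+1}$ are defined analogously with $z_m^{p+1}$,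 $z_{i+1}^k$.
   Context: The equation is understood in the Stratonovich sense; $W$ is a $Q$-Wiener process on $H=L^2(\mathbb{R},\mathbb{R})$ with trace-class covariance $Q$ on a filtered probability space $(\Omega,\mathcal{F},P,\{\mathcal{F}_t\})$, with $Qe_j=\eta_je_j$ for an orthonormal basis $(e_j)$ and independent real Brownian motions $\beta_j$. The stochastic Runge-Kutta method: on a space-time cell $[x_i,x_{i+1}]\times[t_p,t_{p+1}]$ (with $x_{i+1}-x_i=h$, $t_{p+1}-t_p=\tau$) the unknowns are stage values $Z_m^k\in\mathbb{R}^n$ ($m=1,\dots,s$, $k=1,\dots,r$), discrete derivative values $\delta_tZ_m^k,\delta_xZ_m^k\in\mathbb{R}^n$, values $z_m^p,z_m^{p+1}\in\mathbb{R}^n$ (at time levels $t_p,t_{p+1}$ and spatial stage $m$) and $z_i^k,z_{i+1}^k\in\mathbb{R}^n$ (at spatial nodes $x_i,x_{i+1}$ and temporal stage $k$), related by $Z_{m}^{k}=z_{m}^{p}+\tau\sum_{j=1}^{r}a_{kj}\delta_tZ_{m}^{j}$, $z_{m}^{p+1}=z_{m}^{p}+\tau\sum_{k=1}^{r}b_{k}\delta_tZ_{m}^{k}$, $Z_{m}^{k}=z_{i}^{k}+h\sum_{n=1}^{s}\widetilde{a}_{mn}\delta_{x}Z_{n}^{k}$, $z_{i+1}^{k}=z_{i}^{k}+h\sum_{m=1}^{s}\widetilde{b}_{m}\delta_{x}Z_{m}^{k}$, $\tau\mathbf{K}\delta_{t}Z_{m}^{k}+\tau\mathbf{L}\delta_{x}Z_{m}^{k}=\tau\nabla_{z}S_1(Z_{m}^{k})+\nabla_{z}S_2(Z_{m}^{k})\Delta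 W_m^k$, where $\Delta W_m^k=\sum_{j=1}^\infty\sqrt{\eta_j}e_j(x_m)(\beta_j(t^{k+1})-\beta_j(t^{k}))$ is the Wiener increment at the stage point. Here ${\rm d}$ denotes the exterior differential in phase space (variations of the numerical solution with respect to initial data), and for a matrix $\mathbf{M}$, ${\rm d}z\wedge\mathbf{M}{\rm d}z=\sum_{a,b}\mathbf{M}_{ab}\,{\rm d}z_a\wedge{\rm d}z_b$. *)

theory Defs
  imports "HOL-Analysis.Analysis"
begin

fun iter_partial :: "(real^'n \<Rightarrow> real) \<Rightarrow> 'n list \<Rightarrow> real^'n \<Rightarrow> real" where
  "iter_partial f [] = f"
| "iter_partial f (a # as) = (\<lambda>x. frechet_derivative (iter_partial f as) (at x) (axis a 1))"

definition smooth_fun :: "(real^'n \<Rightarrow> real) \<Rightarrow> bool" where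
  "smooth_fun f \<longleftrightarrow> (\<forall>as x. iter_partial f as differentiable (at x))"

definition grad :: "(real^'n \<Rightarrow> real) \<Rightarrow> real^'n \<Rightarrow> real^'n" where
  "grad S x = (\<chi> a. frechet_derivative S (at x) (axis a 1))"

text \<open>The 2-form  dz \<wedge> M dz = \<Sum>_{a,b} M_ab dz_a \<wedge> dz_b  on the phase space 'p of initial data,
  where z is (a component of) the numerical solution viewed as a function of the initial data,
  evaluated at the point \<theta> on the tangent vectors u, v.\<close>
definition wedge_form :: "real^'n^'n \<Rightarrow> ('p::real_normed_vector \<Rightarrow> real^'n) \<Rightarrow> 'p \<Rightarrow> 'p \<Rightarrow> 'p \<Rightarrow> real" where
  "wedge_form M z \<theta> u v =
     (let Dz = frechet_derivative z (at \<theta>) in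
      (\<Sum>a\<in>UNIV. \<Sum>b\<in>UNIV. M $ a $ b * ((Dz u) $ a * (Dz v) $ b - (Dz v) $ a * (Dz u) $ b)))"

end

theory Submission
  imports Defs
begin

text \<open>Differentiating the scheme with respect to the initial data yields the same Runge-Kutta
  relations for the variations, together with a linearized stage equation whose right-hand side
  is a symmetric matrix (a combination of the Hessians of \<open>S\<^sub>1\<close> and \<open>S\<^sub>2\<close>) applied to the stage
  variation. Since \<open>K\<close> and \<open>L\<close> are skew, the stage equation makes the time and space contributions
  of each stage cancel. The conditions on the coefficients are exactly those under which a
  Runge-Kutta step changes a bilinear form only by the weighted stage contributions (the classical
  argument for quadratic invariants), so the increments of \<open>\<omega>\<close> and \<open>\<kappa>\<close> are the weighted sums of
  these cancelling contributions. Symmetry of the Hessians is Schwarz's theorem, obtained from the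
  mean value theorem applied twice to a second difference.\<close>

section \<open>Symmetry of second partial derivatives\<close>

lemma has_derivative_along_line:
  fixes F :: "'a::real_normed_vector \<Rightarrow> real"
  assumes "\<And>x. F differentiable (at x)"
  shows "((\<lambda>t. F (y + t *\<^sub>R v)) has_derivative
           (\<lambda>d. d * frechet_derivative F (at (y + t *\<^sub>R v)) v)) (at t)"
proof -
  have line: "((\<lambda>t. y + t *\<^sub>R v) has_derivative (\<lambda>d. d *\<^sub>R v)) (at t)"
    by (auto intro!: derivative_eq_intros)
  have dF: "(F has_derivative frechet_derivative F (at (y + t *\<^sub>R v))) (at (y + t *\<^sub>R v))"
    using assms frechet_derivative_works by blast
  then have "bounded_linear (frechet_derivative F (at (y + t *\<^sub>R v)))"
    using has_derivative_bounded_linear by blast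
  with diff_chain_at[OF line dF] show ?thesis
    by (simp add: o_def linear_simps)
qed

lemma second_difference_mean_value:
  fixes f :: "'a::real_normed_vector \<Rightarrow> real"
  assumes df: "\<And>x. f differentiable (at x)"
    and dg: "\<And>x. (\<lambda>y. frechet_derivative f (at y) v) differentiable (at x)"
    and h: "h > 0"
  obtains \<xi> \<eta> where "0 < \<xi>" "\<xi> < h" "0 < \<eta>" "\<eta> < h"
    "f (x + h *\<^sub>R v + h *\<^sub>R w) - f (x + h *\<^sub>R v) - f (x + h *\<^sub>R w) + f x
       = h * h * frechet_derivative (\<lambda>y. frechet_derivative f (at y) v) (at (x + \<xi> *\<^sub>R v + \<eta> *\<^sub>R w)) w"
proof -
  define g where "g = (\<lambda>y. frechet_derivative f (at y) v)"
  define u where "u = (\<lambda>s. f (x + h *\<^sub>R w + s *\<^sub>R v) - f (x + s *\<^sub>R v))"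
  have du: "(u has_derivative (\<lambda>d. d * (g (x + h *\<^sub>R w + s *\<^sub>R v) - g (x + s *\<^sub>R v)))) (at s)" for s
  proof -
    have "(u has_derivative (\<lambda>d. d * g (x + h *\<^sub>R w + s *\<^sub>R v) - d * g (x + s *\<^sub>R v))) (at s)"
      unfolding u_def g_def by (intro has_derivative_diff has_derivative_along_line df)
    then show ?thesis by (simp add: right_diff_distrib)
  qed
  obtain \<xi> where \<xi>: "\<xi> \<in> {0<..<h}" "u h - u 0 = h * (g (x + h *\<^sub>R w + \<xi> *\<^sub>R v) - g (x + \<xi> *\<^sub>R v))"
    using mvt_simple[OF h has_derivative_at_withinI[OF du]] by (auto simp: mult.commute)
  define G where "G = (\<lambda>t. g (x + \<xi> *\<^sub>R v + t *\<^sub>R w))"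
  have dG: "(G has_derivative (\<lambda>d. d * frechet_derivative g (at (x + \<xi> *\<^sub>R v + t *\<^sub>R w)) w)) (at t)" for t
    unfolding G_def by (rule has_derivative_along_line) (use dg g_def in auto)
  obtain \<eta> where \<eta>: "\<eta> \<in> {0<..<h}" "G h - G 0 = h * frechet_derivative g (at (x + \<xi> *\<^sub>R v + \<eta> *\<^sub>R w)) w"
    using mvt_simple[OF h has_derivative_at_withinI[OF dG]] by (auto simp: mult.commute)
  have "f (x + h *\<^sub>R v + h *\<^sub>R w) - f (x + h *\<^sub>R v) - f (x + h *\<^sub>R w) + f x = u h - u 0"
    unfolding u_def by (simp add: algebra_simps)
  also have "\<dots> = h * h * frechet_derivative g (at (x + \<xi> *\<^sub>R v + \<eta> *\<^sub>R w)) w"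
    using \<xi> \<eta> unfolding G_def by (simp add: algebra_simps)
  finally show ?thesis using that \<xi> \<eta> unfolding g_def by auto
qed

lemma smooth_fun_iter_partial_differentiable:
  "smooth_fun f \<Longrightarrow> iter_partial f as differentiable (at x)"
  unfolding smooth_fun_def by blast

lemma dist_add_two_axes_less:
  fixes x :: "real^'n"
  assumes "0 < \<xi>" "\<xi> < h" "0 < \<eta>" "\<eta> < h"
  shows "dist (x + \<xi> *\<^sub>R axis a 1 + \<eta> *\<^sub>R axis c 1) x < 2 * h"
proof -
  have "dist (x + \<xi> *\<^sub>R axis a 1 + \<eta> *\<^sub>R axis c 1) x = norm (\<xi> *\<^sub>R axis a (1::real) + \<eta> *\<^sub>R axis c 1)"
    by (simp add: dist_norm)
  also have "\<dots> \<le> norm (\<xi> *\<^sub>R axis a (1::real)) + norm (\<eta> *\<^sub>R axis c (1::real))"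
    by (rule norm_triangle_ineq)
  finally show ?thesis using assms by simp
qed

lemma iter_partial_commute:
  fixes f :: "real^'n \<Rightarrow> real"
  assumes sm: "smooth_fun f"
  shows "iter_partial f [c,a] x = iter_partial f [a,c] x"
proof (rule ccontr)
  assume ne: "iter_partial f [c,a] x \<noteq> iter_partial f [a,c] x"
  define P where "P = iter_partial f [c,a]"
  define Q where "Q = iter_partial f [a,c]"
  define e where "e = \<bar>P x - Q x\<bar> / 2"
  have e: "e > 0" using ne unfolding e_def P_def Q_def by simp
  have cont: "continuous (at x) (iter_partial f as)" for as
    using smooth_fun_iter_partial_differentiable[OF sm] differentiable_imp_continuous_within by blast
  obtain d1 where d1: "d1 > 0" "\<And>y. dist y x < d1 \<Longrightarrow> dist (P y) (P x) < e"
    using cont[of "[c,a]"] e unfolding continuous_at_eps_delta P_def by blast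
  obtain d2 where d2: "d2 > 0" "\<And>y. dist y x < d2 \<Longrightarrow> dist (Q y) (Q x) < e"
    using cont[of "[a,c]"] e unfolding continuous_at_eps_delta Q_def by blast
  define h where "h = min d1 d2 / 4"
  have h: "h > 0" using d1 d2 unfolding h_def by simp
  have df: "f differentiable (at y)" for y
    using smooth_fun_iter_partial_differentiable[OF sm, of "[]"] by simp
  have dg: "(\<lambda>y. frechet_derivative f (at y) (axis i 1)) differentiable (at z)" for i z
    using smooth_fun_iter_partial_differentiable[OF sm, of "[i]"] by simp
  obtain \<xi> \<eta> where 1: "0 < \<xi>" "\<xi> < h" "0 < \<eta>" "\<eta> < h"
    "f (x + h *\<^sub>R axis a 1 + h *\<^sub>R axis c 1) - f (x + h *\<^sub>R axis a 1) - f (x + h *\<^sub>R axis c 1) + f x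
       = h * h * P (x + \<xi> *\<^sub>R axis a 1 + \<eta> *\<^sub>R axis c 1)"
    by (rule second_difference_mean_value[OF df dg h, where x=x and w="axis c 1"]) (simp add: P_def)
  obtain \<xi>' \<eta>' where 2: "0 < \<xi>'" "\<xi>' < h" "0 < \<eta>'" "\<eta>' < h"
    "f (x + h *\<^sub>R axis c 1 + h *\<^sub>R axis a 1) - f (x + h *\<^sub>R axis c 1) - f (x + h *\<^sub>R axis a 1) + f x
       = h * h * Q (x + \<xi>' *\<^sub>R axis c 1 + \<eta>' *\<^sub>R axis a 1)"
    by (rule second_difference_mean_value[OF df dg h, where x=x and w="axis a 1"]) (simp add: Q_def)
  have "h * h * P (x + \<xi> *\<^sub>R axis a 1 + \<eta> *\<^sub>R axis c 1) = h * h * Q (x + \<xi>' *\<^sub>R axis c 1 + \<eta>' *\<^sub>R axis a 1)"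
    using 1(5) 2(5) by (simp add: algebra_simps)
  then have PQ: "P (x + \<xi> *\<^sub>R axis a 1 + \<eta> *\<^sub>R axis c 1) = Q (x + \<xi>' *\<^sub>R axis c 1 + \<eta>' *\<^sub>R axis a 1)"
    using h by simp
  have "dist (P (x + \<xi> *\<^sub>R axis a 1 + \<eta> *\<^sub>R axis c 1)) (P x) < e"
    using d1 d2 dist_add_two_axes_less[OF 1(1-4), of x a c] by (intro d1(2)) (simp add: h_def)
  moreover have "dist (Q (x + \<xi>' *\<^sub>R axis c 1 + \<eta>' *\<^sub>R axis a 1)) (Q x) < e"
    using d1 d2 dist_add_two_axes_less[OF 2(1-4), of x c a] by (intro d2(2)) (simp add: h_def)
  ultimately have "\<bar>P x - Q x\<bar> < 2 * e"
    using PQ abs_triangle_ineq[of "P x - P (x + \<xi> *\<^sub>R axis a 1 + \<eta> *\<^sub>R axis c 1)"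
        "Q (x + \<xi>' *\<^sub>R axis c 1 + \<eta>' *\<^sub>R axis a 1) - Q x"]
    unfolding dist_real_def by (simp add: abs_minus_commute)
  then show False unfolding e_def by simp
qed

section \<open>Gradient, Hessian and bilinear forms\<close>

definition hessian :: "(real^'n \<Rightarrow> real) \<Rightarrow> real^'n \<Rightarrow> real^'n^'n" where
  "hessian S y = (\<chi> a c. iter_partial S [c,a] y)"

lemma hessian_symmetric: "smooth_fun S \<Longrightarrow> transpose (hessian S y) = hessian S y"
  unfolding hessian_def transpose_def using iter_partial_commute[of S] by (simp add: vec_eq_iff)

lemma linear_axis_expansion:
  fixes g :: "real^'n \<Rightarrow> real"
  assumes "linear g"
  shows "g w = (\<Sum>c\<in>UNIV. w$c * g (axis c 1))"
proof -
  have "g w = g (\<Sum>c\<in>UNIV. w$c *\<^sub>R axis c 1)"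
    using basis_expansion[of w] by (simp add: scalar_mult_eq_scaleR)
  also have "\<dots> = (\<Sum>c\<in>UNIV. w$c * g (axis c 1))"
    using assms by (simp add: linear_sum linear_scale)
  finally show ?thesis .
qed

lemma has_derivative_grad:
  fixes S :: "real^'n \<Rightarrow> real"
  assumes sm: "smooth_fun S"
  shows "(grad S has_derivative (\<lambda>w. hessian S y *v w)) (at y)"
proof -
  have "((\<lambda>x. grad S x \<bullet> i) has_derivative (\<lambda>w. (hessian S y *v w) \<bullet> i)) (at y)" if i: "i \<in> Basis" for i
  proof -
    obtain a where ia: "i = axis a 1" using i by (auto simp: Basis_vec_def)
    have grad_i: "(\<lambda>x. grad S x \<bullet> i) = iter_partial S [a]"
      by (rule ext) (simp add: ia grad_def inner_axis)
    define D where "D = frechet_derivative (iter_partial S [a]) (at y)"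
    have dD: "(iter_partial S [a] has_derivative D) (at y)"
      unfolding D_def using smooth_fun_iter_partial_differentiable[OF sm] frechet_derivative_works by blast
    have "D w = (hessian S y *v w) \<bullet> i" for w
      unfolding linear_axis_expansion[OF has_derivative_linear[OF dD], of w] ia
      by (simp add: inner_axis hessian_def matrix_vector_mult_def D_def mult.commute)
    then have "D = (\<lambda>w. (hessian S y *v w) \<bullet> i)" by auto
    then show ?thesis using dD grad_i by simp
  qed
  then show ?thesis
    using has_derivative_componentwise_within[of "grad S" "\<lambda>w. hessian S y *v w" y UNIV] by simp
qed

lemma transpose_add: "transpose (A + B) = transpose A + transpose (B::'a::semiring_1^'n^'m)"
  by (simp add: transpose_def vec_eq_iff)

definition matrix_form :: "real^'n^'n \<Rightarrow> real^'n \<Rightarrow> real^'n \<Rightarrow> real" where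
  "matrix_form M p q = p \<bullet> (M *v q)"

lemma bilinear_matrix_form: "bilinear (matrix_form M)"
  unfolding bilinear_def matrix_form_def
  by (auto intro!: linearI simp: inner_add_left inner_add_right matrix_vector_right_distrib
      matrix_vector_mult_scaleR)

lemma matrix_form_transpose: "matrix_form (transpose M) p q = matrix_form M q p"
  unfolding matrix_form_def by (metis dot_lmul_matrix inner_commute vector_transpose_matrix)

lemma matrix_form_skew:
  "transpose M = - M \<Longrightarrow> matrix_form M p q = - matrix_form M q p"
  using matrix_form_transpose[of M q p]
  by (simp add: matrix_form_def matrix_vector_mult_def vec_eq_iff sum_negf inner_vec_def)

lemma wedge_form_skew:
  fixes M :: "real^'n^'n"
  assumes "transpose M = - M"
  shows "wedge_form M z \<theta> u v
    = 2 * matrix_form M (frechet_derivative z (at \<theta>) u) (frechet_derivative z (at \<theta>) v)"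
proof -
  have "(\<Sum>a\<in>UNIV. \<Sum>b\<in>UNIV. M$a$b * (p$a * q$b - q$a * p$b)) = matrix_form M p q - matrix_form M q p"
    for p q :: "real^'n"
    by (simp add: matrix_form_def inner_vec_def matrix_vector_mult_def sum_distrib_left
        sum_subtractf algebra_simps)
  then show ?thesis
    using matrix_form_skew[OF assms, of "frechet_derivative z (at \<theta>) v" "frechet_derivative z (at \<theta>) u"]
    by (simp add: wedge_form_def Let_def)
qed

section \<open>Quadratic invariants of symplectic Runge-Kutta steps\<close>

lemma bilinear_rk_increment:
  fixes B :: "'a::real_vector \<Rightarrow> 'b::real_vector \<Rightarrow> real"
  assumes bil: "bilinear B"
    and sympl: "\<And>k j. k < r \<Longrightarrow> j < r \<Longrightarrow> b k * b j - b k * a k j - b j * a j k = 0"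
    and stage: "\<And>k. k < r \<Longrightarrow> Y k = P + \<tau> *\<^sub>R (\<Sum>j<r. a k j *\<^sub>R U j)"
    and stage': "\<And>k. k < r \<Longrightarrow> Y' k = P' + \<tau> *\<^sub>R (\<Sum>j<r. a k j *\<^sub>R V j)"
  shows "B (P + \<tau> *\<^sub>R (\<Sum>k<r. b k *\<^sub>R U k)) (P' + \<tau> *\<^sub>R (\<Sum>k<r. b k *\<^sub>R V k)) - B P P'
       = \<tau> * (\<Sum>k<r. b k * (B (U k) (Y' k) + B (Y k) (V k)))"
proof -
  interpret left: linear "\<lambda>x. B x y" for y using bil by (simp add: bilinear_def)
  interpret right: linear "\<lambda>y. B x y" for x using bil by (simp add: bilinear_def)
  define x where "x k j = B (U k) (V j)" for k j
  define A where "A = (\<Sum>k<r. b k * B (U k) P') + (\<Sum>k<r. b k * B P (V k))"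
  have expand: "B (P + \<tau> *\<^sub>R X) (P' + \<tau> *\<^sub>R X') - B P P' = \<tau> * (B X P' + B P X') + \<tau> * \<tau> * B X X'"
    for X X' by (simp add: left.add right.add left.scale right.scale algebra_simps)
  have "B (\<Sum>k<r. b k *\<^sub>R U k) (\<Sum>j<r. b j *\<^sub>R V j) = (\<Sum>k<r. \<Sum>j<r. b k * b j * x k j)"
    unfolding left.sum by (simp add: right.sum left.scale right.scale x_def sum_distrib_left mult_ac)
  then have "B (P + \<tau> *\<^sub>R (\<Sum>k<r. b k *\<^sub>R U k)) (P' + \<tau> *\<^sub>R (\<Sum>k<r. b k *\<^sub>R V k)) - B P P'
      = \<tau> * A + \<tau> * \<tau> * (\<Sum>k<r. \<Sum>j<r. b k * b j * x k j)"
    unfolding expand A_def by (simp add: left.sum right.sum left.scale right.scale)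
  also have "(\<Sum>k<r. \<Sum>j<r. b k * b j * x k j)
      = (\<Sum>k<r. \<Sum>j<r. b k * a k j * x k j) + (\<Sum>k<r. \<Sum>j<r. b j * a j k * x k j)"
    using sympl by (simp add: sum.distrib[symmetric] distrib_right[symmetric] algebra_simps)
  also have "(\<Sum>k<r. \<Sum>j<r. b j * a j k * x k j) = (\<Sum>k<r. \<Sum>j<r. b k * a k j * x j k)"
    by (rule sum.swap)
  also have "\<tau> * A + \<tau> * \<tau> * ((\<Sum>k<r. \<Sum>j<r. b k * a k j * x k j) + (\<Sum>k<r. \<Sum>j<r. b k * a k j * x j k))
      = \<tau> * (\<Sum>k<r. b k * (B (U k) (Y' k) + B (Y k) (V k)))"
    by (simp add: stage stage' left.add right.add left.sum right.sum left.scale right.scale A_def x_def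
        sum.distrib sum_distrib_left algebra_simps)
  finally show ?thesis .
qed

lemma frechet_derivative_add_scaleR_sum:
  fixes G :: "'a::real_normed_vector \<Rightarrow> 'b::real_normed_vector"
  assumes "finite J" "G differentiable (at \<theta>)" "\<forall>j\<in>J. H j differentiable (at \<theta>)"
  shows "frechet_derivative (\<lambda>t. G t + c *\<^sub>R (\<Sum>j\<in>J. e j *\<^sub>R H j t)) (at \<theta>) w
       = frechet_derivative G (at \<theta>) w + c *\<^sub>R (\<Sum>j\<in>J. e j *\<^sub>R frechet_derivative (H j) (at \<theta>) w)"
proof -
  have "((\<lambda>t. G t + c *\<^sub>R (\<Sum>j\<in>J. e j *\<^sub>R H j t)) has_derivative
        (\<lambda>w. frechet_derivative G (at \<theta>) w + c *\<^sub>R (\<Sum>j\<in>J. e j *\<^sub>R frechet_derivative (H j) (at \<theta>) w))) (at \<theta>)"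
    using assms by (intro has_derivative_add has_derivative_scaleR_right has_derivative_sum)
      (auto simp: frechet_derivative_works)
  from fun_cong[OF frechet_derivative_at[OF this], of w] show ?thesis by simp
qed

lemma wedge_form_rk_increment:
  fixes M :: "real^'n^'n" and z0 z1 :: "'p::real_normed_vector \<Rightarrow> real^'n"
    and U Y :: "nat \<Rightarrow> 'p \<Rightarrow> real^'n"
  assumes skew: "transpose M = - M"
    and sympl: "\<And>k j. k < r \<Longrightarrow> j < r \<Longrightarrow> b k * b j - b k * a k j - b j * a j k = 0"
    and diff_z0: "z0 differentiable (at \<theta>)" and diff_U: "\<And>k. k < r \<Longrightarrow> U k differentiable (at \<theta>)"
    and stage: "\<And>k t. k < r \<Longrightarrow> Y k t = z0 t + \<tau> *\<^sub>R (\<Sum>j<r. a k j *\<^sub>R U j t)"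
    and step: "\<And>t. z1 t = z0 t + \<tau> *\<^sub>R (\<Sum>k<r. b k *\<^sub>R U k t)"
  shows "wedge_form M z1 \<theta> u v - wedge_form M z0 \<theta> u v
       = 2 * \<tau> * (\<Sum>k<r. b k *
           (matrix_form M (frechet_derivative (U k) (at \<theta>) u) (frechet_derivative (Y k) (at \<theta>) v)
          + matrix_form M (frechet_derivative (Y k) (at \<theta>) u) (frechet_derivative (U k) (at \<theta>) v)))"
proof -
  let ?D = "\<lambda>f w. frechet_derivative f (at \<theta>) w"
  have dY: "?D (Y k) w = ?D z0 w + \<tau> *\<^sub>R (\<Sum>j<r. a k j *\<^sub>R ?D (U j) w)" if "k < r" for k w
  proof -
    have "Y k = (\<lambda>t. z0 t + \<tau> *\<^sub>R (\<Sum>j<r. a k j *\<^sub>R U j t))" using stage[OF that] by (rule ext)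
    then show ?thesis by (simp add: frechet_derivative_add_scaleR_sum diff_z0 diff_U)
  qed
  have "z1 = (\<lambda>t. z0 t + \<tau> *\<^sub>R (\<Sum>k<r. b k *\<^sub>R U k t))" using step by (rule ext)
  then have dz1: "?D z1 w = ?D z0 w + \<tau> *\<^sub>R (\<Sum>k<r. b k *\<^sub>R ?D (U k) w)" for w
    by (simp add: frechet_derivative_add_scaleR_sum diff_z0 diff_U)
  show ?thesis
    unfolding wedge_form_skew[OF skew] dz1
    using bilinear_rk_increment[OF bilinear_matrix_form[of M] sympl dY[of _ u] dY[of _ v]]
    by simp
qed

section \<open>The linearized stage equation\<close>

lemma linearized_stage_equation:
  fixes K L :: "real^'n^'n" and T X Z :: "'p::real_normed_vector \<Rightarrow> real^'n"
  assumes eq: "\<And>t. \<tau> *\<^sub>R (K *v T t) + \<tau> *\<^sub>R (L *v X t) = \<tau> *\<^sub>R grad S1 (Z t) + c *\<^sub>R grad S2 (Z t)"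
    and dT: "T differentiable (at \<theta>)" and dX: "X differentiable (at \<theta>)" and dZ: "Z differentiable (at \<theta>)"
    and sm1: "smooth_fun S1" and sm2: "smooth_fun S2"
  shows "\<tau> *\<^sub>R (K *v frechet_derivative T (at \<theta>) w) + \<tau> *\<^sub>R (L *v frechet_derivative X (at \<theta>) w)
       = (\<tau> *\<^sub>R hessian S1 (Z \<theta>) + c *\<^sub>R hessian S2 (Z \<theta>)) *v frechet_derivative Z (at \<theta>) w"
proof -
  let ?D = "\<lambda>f w. frechet_derivative f (at \<theta>) w"
  have bl: "bounded_linear ((*v) M)" for M :: "real^'n^'n" by simp
  have lhs: "((\<lambda>t. \<tau> *\<^sub>R (K *v T t) + \<tau> *\<^sub>R (L *v X t)) has_derivative
      (\<lambda>w. \<tau> *\<^sub>R (K *v ?D T w) + \<tau> *\<^sub>R (L *v ?D X w))) (at \<theta>)"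
    using dT dX unfolding frechet_derivative_works
    by (intro has_derivative_add has_derivative_scaleR_right bounded_linear.has_derivative[OF bl])
  have rhs: "((\<lambda>t. \<tau> *\<^sub>R grad S1 (Z t) + c *\<^sub>R grad S2 (Z t)) has_derivative
      (\<lambda>w. \<tau> *\<^sub>R (hessian S1 (Z \<theta>) *v ?D Z w) + c *\<^sub>R (hessian S2 (Z \<theta>) *v ?D Z w))) (at \<theta>)"
    using dZ unfolding frechet_derivative_works
    by (intro has_derivative_add has_derivative_scaleR_right
        has_derivative_compose[OF _ has_derivative_grad[OF sm1]]
        has_derivative_compose[OF _ has_derivative_grad[OF sm2]])
  from has_derivative_unique[OF lhs[unfolded eq] rhs] show ?thesis
    by (simp add: fun_eq_iff matrix_vector_mult_add_rdistrib scaleR_matrix_vector_assoc)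
qed

lemma skew_stage_forms_cancel:
  fixes K L H :: "real^'n^'n"
  assumes skK: "transpose K = - K" and skL: "transpose L = - L" and symH: "transpose H = H"
    and "\<tau> \<noteq> 0"
    and eq: "\<tau> *\<^sub>R (K *v T) + \<tau> *\<^sub>R (L *v X) = H *v Z"
    and eq': "\<tau> *\<^sub>R (K *v T') + \<tau> *\<^sub>R (L *v X') = H *v Z'"
  shows "matrix_form K T Z' + matrix_form K Z T' + matrix_form L X Z' + matrix_form L Z X' = 0"
proof -
  have "\<tau> * (matrix_form K T Z' + matrix_form K Z T' + matrix_form L X Z' + matrix_form L Z X')
      = Z \<bullet> (\<tau> *\<^sub>R (K *v T') + \<tau> *\<^sub>R (L *v X')) - Z' \<bullet> (\<tau> *\<^sub>R (K *v T) + \<tau> *\<^sub>R (L *v X))"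
    using matrix_form_skew[OF skK, of T Z'] matrix_form_skew[OF skL, of X Z']
    by (simp add: matrix_form_def inner_add_right algebra_simps)
  also have "\<dots> = matrix_form H Z Z' - matrix_form H Z' Z"
    by (simp add: eq eq' matrix_form_def)
  also have "\<dots> = 0"
    using matrix_form_transpose[of H Z' Z] symH by simp
  finally show ?thesis using \<open>\<tau> \<noteq> 0\<close> by simp
qed

lemma discrete_conservation_from_increments:
  fixes \<omega>0 \<omega>1 \<kappa>0 \<kappa>1 :: "nat \<Rightarrow> real" and E F :: "nat \<Rightarrow> nat \<Rightarrow> real"
  assumes "\<tau> \<noteq> 0" "h \<noteq> 0"
    and time: "\<And>m. m < s \<Longrightarrow> \<omega>1 m - \<omega>0 m = 2 * \<tau> * (\<Sum>k<r. b k * E m k)"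
    and space: "\<And>k. k < r \<Longrightarrow> \<kappa>1 k - \<kappa>0 k = 2 * h * (\<Sum>m<s. bb m * F m k)"
    and cancel: "\<And>m k. m < s \<Longrightarrow> k < r \<Longrightarrow> E m k + F m k = 0"
  shows "((1/2) * (\<Sum>m<s. bb m * \<omega>1 m) - (1/2) * (\<Sum>m<s. bb m * \<omega>0 m)) / \<tau>
       + ((1/2) * (\<Sum>k<r. b k * \<kappa>1 k) - (1/2) * (\<Sum>k<r. b k * \<kappa>0 k)) / h = 0"
proof -
  have "((1/2) * (\<Sum>m<s. bb m * \<omega>1 m) - (1/2) * (\<Sum>m<s. bb m * \<omega>0 m)) / \<tau>
      = (\<Sum>m<s. bb m * (\<omega>1 m - \<omega>0 m)) / (2 * \<tau>)"
    by (simp add: sum_subtractf right_diff_distrib diff_divide_distrib)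
  also have "\<dots> = (\<Sum>m<s. \<Sum>k<r. bb m * b k * E m k)"
    using \<open>\<tau> \<noteq> 0\<close> by (simp add: time sum_divide_distrib sum_distrib_left mult_ac)
  finally have \<omega>: "((1/2) * (\<Sum>m<s. bb m * \<omega>1 m) - (1/2) * (\<Sum>m<s. bb m * \<omega>0 m)) / \<tau>
      = (\<Sum>m<s. \<Sum>k<r. bb m * b k * E m k)" .
  have "((1/2) * (\<Sum>k<r. b k * \<kappa>1 k) - (1/2) * (\<Sum>k<r. b k * \<kappa>0 k)) / h
      = (\<Sum>k<r. b k * (\<kappa>1 k - \<kappa>0 k)) / (2 * h)"
    by (simp add: sum_subtractf right_diff_distrib diff_divide_distrib)
  also have "\<dots> = (\<Sum>k<r. \<Sum>m<s. bb m * b k * F m k)"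
    using \<open>h \<noteq> 0\<close> by (simp add: space sum_divide_distrib sum_distrib_left mult_ac)
  also have "\<dots> = (\<Sum>m<s. \<Sum>k<r. bb m * b k * F m k)"
    by (rule sum.swap)
  finally have \<kappa>: "((1/2) * (\<Sum>k<r. b k * \<kappa>1 k) - (1/2) * (\<Sum>k<r. b k * \<kappa>0 k)) / h
      = (\<Sum>m<s. \<Sum>k<r. bb m * b k * F m k)" .
  have "(\<Sum>m<s. \<Sum>k<r. bb m * b k * E m k) + (\<Sum>m<s. \<Sum>k<r. bb m * b k * F m k)
      = (\<Sum>m<s. \<Sum>k<r. bb m * b k * (E m k + F m k))"
    by (simp add: sum.distrib[symmetric] distrib_left)
  also have "\<dots> = 0" by (simp add: cancel)
  finally show ?thesis unfolding \<omega> \<kappa> .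
qed

theorem mainTheorem1:
  fixes K L :: "real^'n^'n"
    and S1 S2 :: "real^'n \<Rightarrow> real"
    and r s :: nat
    and a :: "nat \<Rightarrow> nat \<Rightarrow> real" and b :: "nat \<Rightarrow> real"
    and aa :: "nat \<Rightarrow> nat \<Rightarrow> real" and bb :: "nat \<Rightarrow> real"
    and \<tau> h :: real
    and dW :: "nat \<Rightarrow> nat \<Rightarrow> real"
    and Z dtZ dxZ :: "nat \<Rightarrow> nat \<Rightarrow> 'p::euclidean_space \<Rightarrow> real^'n"
    and zp zp1 zi zi1 :: "nat \<Rightarrow> 'p \<Rightarrow> real^'n"
  assumes n2: "CARD('n) \<ge> 2"
    and skewK: "transpose K = - K" and skewL: "transpose L = - L"
    and smooth1: "smooth_fun S1" and smooth2: "smooth_fun S2"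
    and tau_pos: "\<tau> > 0" and h_pos: "h > 0"
    and sympl_t: "\<And>k j. k < r \<Longrightarrow> j < r \<Longrightarrow> b k * b j - b k * a k j - b j * a j k = 0"
    and sympl_x: "\<And>m n. m < s \<Longrightarrow> n < s \<Longrightarrow> bb m * bb n - bb m * aa m n - bb n * aa n m = 0"
    and diff_Z: "\<And>m k \<theta>. m < s \<Longrightarrow> k < r \<Longrightarrow>
        Z m k differentiable (at \<theta>) \<and> dtZ m k differentiable (at \<theta>) \<and> dxZ m k differentiable (at \<theta>)"
    and diff_zm: "\<And>m \<theta>. m < s \<Longrightarrow> zp m differentiable (at \<theta>) \<and> zp1 m differentiable (at \<theta>)"
    and diff_zk: "\<And>k \<theta>. k < r \<Longrightarrow> zi k differentiable (at \<theta>) \<and> zi1 k differentiable (at \<theta>)"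
    and eq1: "\<And>m k \<theta>. m < s \<Longrightarrow> k < r \<Longrightarrow>
        Z m k \<theta> = zp m \<theta> + \<tau> *\<^sub>R (\<Sum>j<r. a k j *\<^sub>R dtZ m j \<theta>)"
    and eq2: "\<And>m \<theta>. m < s \<Longrightarrow>
        zp1 m \<theta> = zp m \<theta> + \<tau> *\<^sub>R (\<Sum>k<r. b k *\<^sub>R dtZ m k \<theta>)"
    and eq3: "\<And>m k \<theta>. m < s \<Longrightarrow> k < r \<Longrightarrow>
        Z m k \<theta> = zi k \<theta> + h *\<^sub>R (\<Sum>n<s. aa m n *\<^sub>R dxZ n k \<theta>)"
    and eq4: "\<And>k \<theta>. k < r \<Longrightarrow>
        zi1 k \<theta> = zi k \<theta> + h *\<^sub>R (\<Sum>m<s. bb m *\<^sub>R dxZ m k \<theta>)"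
    and eq5: "\<And>m k \<theta>. m < s \<Longrightarrow> k < r \<Longrightarrow>
        \<tau> *\<^sub>R (K *v dtZ m k \<theta>) + \<tau> *\<^sub>R (L *v dxZ m k \<theta>)
          = \<tau> *\<^sub>R grad S1 (Z m k \<theta>) + dW m k *\<^sub>R grad S2 (Z m k \<theta>)"
  shows "\<forall>\<theta> u v.
     ((1/2) * (\<Sum>m<s. bb m * wedge_form K (zp1 m) \<theta> u v)
        - (1/2) * (\<Sum>m<s. bb m * wedge_form K (zp m) \<theta> u v)) / \<tau>
   + ((1/2) * (\<Sum>k<r. b k * wedge_form L (zi1 k) \<theta> u v)
        - (1/2) * (\<Sum>k<r. b k * wedge_form L (zi k) \<theta> u v)) / h = 0"
proof -
  let ?D = "\<lambda>f \<theta> w. frechet_derivative f (at \<theta>) w"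
  define E where "E \<theta> u v m k = matrix_form K (?D (dtZ m k) \<theta> u) (?D (Z m k) \<theta> v)
      + matrix_form K (?D (Z m k) \<theta> u) (?D (dtZ m k) \<theta> v)" for \<theta> u v m k
  define F where "F \<theta> u v m k = matrix_form L (?D (dxZ m k) \<theta> u) (?D (Z m k) \<theta> v)
      + matrix_form L (?D (Z m k) \<theta> u) (?D (dxZ m k) \<theta> v)" for \<theta> u v m k
  have time: "wedge_form K (zp1 m) \<theta> u v - wedge_form K (zp m) \<theta> u v
      = 2 * \<tau> * (\<Sum>k<r. b k * E \<theta> u v m k)" if "m < s" for \<theta> u v m
    unfolding E_def using that diff_zm diff_Z
    by (intro wedge_form_rk_increment[OF skewK sympl_t]) (auto simp: eq1 eq2)
  have space: "wedge_form L (zi1 k) \<theta> u v - wedge_form L (zi k) \<theta> u v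
      = 2 * h * (\<Sum>m<s. bb m * F \<theta> u v m k)" if "k < r" for \<theta> u v k
    unfolding F_def using that diff_zk diff_Z
    by (intro wedge_form_rk_increment[OF skewL sympl_x, where Y = "\<lambda>m. Z m k"]) (auto simp: eq3 eq4)
  have cancel: "E \<theta> u v m k + F \<theta> u v m k = 0" if "m < s" "k < r" for \<theta> u v m k
  proof -
    have lin: "\<tau> *\<^sub>R (K *v ?D (dtZ m k) \<theta> w) + \<tau> *\<^sub>R (L *v ?D (dxZ m k) \<theta> w)
        = (\<tau> *\<^sub>R hessian S1 (Z m k \<theta>) + dW m k *\<^sub>R hessian S2 (Z m k \<theta>)) *v ?D (Z m k) \<theta> w" for w
      using that diff_Z eq5 by (intro linearized_stage_equation smooth1 smooth2) auto
    have "transpose (\<tau> *\<^sub>R hessian S1 (Z m k \<theta>) + dW m k *\<^sub>R hessian S2 (Z m k \<theta>))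
        = \<tau> *\<^sub>R hessian S1 (Z m k \<theta>) + dW m k *\<^sub>R hessian S2 (Z m k \<theta>)"
      by (simp add: transpose_add transpose_scalar hessian_symmetric smooth1 smooth2)
    from skew_stage_forms_cancel[OF skewK skewL this _ lin lin] tau_pos show ?thesis
      unfolding E_def F_def by (simp add: algebra_simps)
  qed
  show ?thesis
    using discrete_conservation_from_increments[OF _ _ time space cancel] tau_pos h_pos by simp
qed

end
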